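(* Let $\alpha_0>0$, $\omega_0\neq 0$, and $$\alpha^*_{pl}(\omega)=\alpha_0|\omega|+i\frac{2}{\pi}\alpha_0\,\omega\log\left|\frac{\omega}{\omega_0}\right|,\qquad\omega\in\mathbb{R}.$$ Then the function $K(\vec x,t)=\frac{1}{\sqrt{2\pi}}\mathcal{F}^{-1}\{e^{-\alpha^*_{pl}(\cdot)|\vec x|}\}(t)$ is not causal.
   Context: Fourier convention: $\mathcal{F}^{-1}\{\hat f\}(t)=\frac{1}{\sqrt{2\pi}}\int_{\mathbb{R}}e^{-i\omega t}\hat f(\omega)\,d\omega$ (tempered distributions). $K$ is causal if $t\mapsto K(\vec x,t)$ vanishes for $t<0$ for every $\vec x\in\mathbb{R}^3$. *)

theory Defs
  imports "HOL-Analysis.Analysis"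
begin

text \<open>The attenuation law alpha*_pl(omega) = alpha0 |omega| + i (2/pi) alpha0 omega log|omega/omega0|.
  At omega = 0 the value is the continuous extension 0 (a single point; irrelevant for integrals).\<close>
definition alpha_pl :: "real \<Rightarrow> real \<Rightarrow> real \<Rightarrow> complex" where
  "alpha_pl \<alpha>0 \<omega>0 \<omega> =
     (if \<omega> = 0 then 0
      else complex_of_real (\<alpha>0 * \<bar>\<omega>\<bar>)
           + \<i> * complex_of_real ((2 / pi) * \<alpha>0 * \<omega> * ln \<bar>\<omega> / \<omega>0\<bar>))"

definition inv_fourier :: "(real \<Rightarrow> complex) \<Rightarrow> real \<Rightarrow> complex" where
  "inv_fourier g t =
     complex_of_real (1 / sqrt (2 * pi)) *
     (\<integral>\<omega>. exp (- \<i> * complex_of_real (\<omega> * t)) * g \<omega> \<partial>lborel)"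

definition K_pl :: "real \<Rightarrow> real \<Rightarrow> real ^ 3 \<Rightarrow> real \<Rightarrow> complex" where
  "K_pl \<alpha>0 \<omega>0 x t =
     complex_of_real (1 / sqrt (2 * pi)) *
     inv_fourier (\<lambda>\<omega>. exp (- alpha_pl \<alpha>0 \<omega>0 \<omega> * complex_of_real (norm x))) t"

text \<open>Causality: for every x, t \<mapsto> K(x,t) vanishes for t < 0 (almost everywhere,
  i.e. as a locally integrable function / distribution).\<close>
definition causal :: "(real ^ 3 \<Rightarrow> real \<Rightarrow> complex) \<Rightarrow> bool" where
  "causal K \<longleftrightarrow> (\<forall>x. AE t in lborel. t < 0 \<longrightarrow> K x t = 0)"

end

theory Submission
  imports Defs "HOL-Probability.Probability" "HOL-Complex_Analysis.Complex_Analysis"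
begin

text \<open>For \<open>|x| = 1\<close> the kernel \<open>t \<mapsto> K(x,t)\<close> is a constant multiple of the Fourier integral
  \<open>F(z) = \<integral> exp(-i\<omega>z) G(\<omega>) d\<omega>\<close> of \<open>G = exp(-\<alpha>*_pl)\<close>. Since \<open>|G(\<omega>)| = exp(-\<alpha>0|\<omega>|)\<close>,
  \<open>F\<close> is holomorphic in the strip \<open>|Im z| < \<alpha>0\<close>. Causality makes \<open>F\<close> vanish almost everywhere
  on the negative reals, so \<open>F = 0\<close> by analytic continuation, and uniqueness of the Fourier
  transform forces \<open>G = 0\<close> almost everywhere, which is absurd because \<open>G\<close> has no zeros.\<close>

lemma integrable_exp_neg_abs:
  fixes c :: real
  assumes c: "c > 0"
  shows "integrable lborel (\<lambda>x. exp (- c * \<bar>x\<bar>))"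
proof -
  interpret prob_space "density lborel (exponential_density c)"
    using prob_space_exponential_density[OF c] .
  have "integrable (density lborel (\<lambda>x. ennreal (exponential_density c x))) (\<lambda>_. 1::real)"
    by simp
  then have right: "integrable lborel (exponential_density c)"
    by (subst (asm) integrable_density) (auto simp: exponential_density_nonneg[OF c])
  have left: "integrable lborel (\<lambda>x. exponential_density c (0 + (-1) * x))"
    by (rule lborel_integrable_real_affine[OF right]) simp
  have "integrable lborel (\<lambda>x. (exponential_density c x + exponential_density c (0 + (-1) * x)) / c)"
    using right left by auto
  then show ?thesis
    by (rule Bochner_Integration.integrable_bound)
       (use c in \<open>auto simp: exponential_density_def\<close>)
qed

lemma sum_exp_series_le_exp:
  fixes x :: real
  assumes "x \<ge> 0"
  shows "(\<Sum>n<N. x ^ n / fact n) \<le> exp x"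
proof -
  have s: "(\<lambda>n. x ^ n / fact n) sums exp x"
    using exp_converges[of x] by (simp add: divide_inverse mult.commute)
  show ?thesis
    using sum_le_suminf[OF sums_summable[OF s], of "{..<N}"] sums_unique[OF s] assms by auto
qed

lemma power_div_fact_le_exp:
  fixes x :: real
  assumes "x \<ge> 0"
  shows "x ^ n / fact n \<le> exp x"
proof -
  have "x ^ n / fact n \<le> (\<Sum>k<Suc n. x ^ k / fact k)"
    using assms by (intro member_le_sum) auto
  also have "\<dots> \<le> exp x" by (rule sum_exp_series_le_exp[OF assms])
  finally show ?thesis .
qed

lemma AE_lborel_ex_in_Ioo:
  fixes a b :: real
  assumes "AE x in lborel. P x" and "a < b"
  shows "\<exists>x. a < x \<and> x < b \<and> P x"
proof (rule ccontr)
  assume "\<not> ?thesis"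
  then have sub: "{a<..<b} \<subseteq> {x \<in> space lborel. \<not> P x}" by auto
  from assms(1) obtain N where "{x \<in> space lborel. \<not> P x} \<subseteq> N" "emeasure lborel N = 0" "N \<in> sets lborel"
    by (rule AE_E)
  then have "emeasure lborel {a<..<b} \<le> 0"
    using sub by (metis emeasure_mono order_trans order_refl)
  then show False using assms(2) emeasure_lborel_Ioo[of a b] by simp
qed

section \<open>Uniqueness of the Fourier transform\<close>

lemma integrable_iexp_mult:
  fixes g :: "real \<Rightarrow> complex"
  assumes "integrable lborel g"
  shows "integrable lborel (\<lambda>x. iexp (t * x) * g x)"
  by (rule Bochner_Integration.integrable_bound[OF assms]) (use assms in \<open>auto simp: norm_mult\<close>)

text \<open>Normalise both functions to probability densities and compare their characteristic
  functions with Levy's uniqueness theorem.\<close>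
lemma AE_eq_if_fourier_eq_nonneg:
  fixes p q :: "real \<Rightarrow> real"
  assumes int_p: "integrable lborel p" and int_q: "integrable lborel q"
    and nonneg: "\<And>x. p x \<ge> 0" "\<And>x. q x \<ge> 0"
    and char_eq: "\<And>t. (\<integral>x. iexp (t * x) * complex_of_real (p x) \<partial>lborel)
      = (\<integral>x. iexp (t * x) * complex_of_real (q x) \<partial>lborel)"
  shows "AE x in lborel. p x = q x"
proof -
  have [measurable]: "p \<in> borel_measurable borel" "q \<in> borel_measurable borel"
    using int_p int_q by simp_all
  define m where "m = (\<integral>x. p x \<partial>lborel)"
  have m_q: "m = (\<integral>x. q x \<partial>lborel)"
    using char_eq[of 0] by (simp add: m_def)
  show ?thesis
  proof (cases "m = 0")
    case True
    then have "AE x in lborel. p x = 0" "AE x in lborel. q x = 0"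
      using int_p int_q nonneg m_q
      by (auto simp: m_def integral_nonneg_eq_0_iff_AE[symmetric])
    then show ?thesis by eventually_elim simp
  next
    case False
    then have m: "m > 0" using nonneg by (simp add: m_def integral_nonneg order_less_le)
    define M where "M f = density lborel (\<lambda>x::real. ennreal (f x / m))" for f
    have distr: "real_distribution (M f)"
      if "integrable lborel f" "\<And>x. f x \<ge> 0" "(\<integral>x. f x \<partial>lborel) = m" for f
    proof -
      have "(\<integral>\<^sup>+x. ennreal (f x / m) \<partial>lborel) = ennreal (\<integral>x. f x / m \<partial>lborel)"
        using that m by (intro nn_integral_eq_integral) auto
      also have "\<dots> = 1" using that m by simp
      moreover have "f \<in> borel_measurable borel" using that(1) by simp
      ultimately show ?thesis
        unfolding M_def real_distribution_def real_distribution_axioms_def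
        by (auto intro!: prob_spaceI simp: emeasure_density)
    qed
    have char_M: "char (M f) t = (\<integral>x. iexp (t * x) * complex_of_real (f x) \<partial>lborel) / m"
      if "\<And>x. f x \<ge> 0" "f \<in> borel_measurable borel" for f t
      unfolding char_def M_def using that m
      by (subst integral_density) (auto simp: scaleR_conv_of_real divide_simps mult.commute)
    have "char (M p) = char (M q)"
      using char_M[of p] char_M[of q] nonneg char_eq by fastforce
    then have "M p = M q"
      using Levy_uniqueness distr[OF int_p nonneg(1)] distr[OF int_q nonneg(2)] m_q
      by (auto simp: m_def)
    then have "AE x in lborel. ennreal (p x / m) = ennreal (q x / m)"
      unfolding M_def by (intro sigma_finite_measure.density_unique[OF sigma_finite_lborel]) auto
    then show ?thesis
      by eventually_elim (use nonneg m in \<open>auto simp: divide_simps\<close>)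
  qed
qed

lemma fourier_uniqueness_real:
  fixes h :: "real \<Rightarrow> real"
  assumes int_h: "integrable lborel h"
    and zero: "\<And>t. (\<integral>x. iexp (t * x) * complex_of_real (h x) \<partial>lborel) = 0"
  shows "AE x in lborel. h x = 0"
proof -
  define p where "p x = max (h x) 0" for x
  define q where "q x = max (- h x) 0" for x
  have int_p: "integrable lborel p" and int_q: "integrable lborel q"
    unfolding p_def q_def using int_h by (auto intro!: integrable_max)
  have h_eq: "h x = p x - q x" for x by (simp add: p_def q_def max_def)
  have int_iexp: "integrable lborel (\<lambda>x. iexp (t * x) * complex_of_real (f x))"
    if "integrable lborel f" for f t
    using that by (intro integrable_iexp_mult) (simp add: complex_of_real_integrable_eq)
  have "(\<integral>x. iexp (t * x) * complex_of_real (p x) \<partial>lborel)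
      - (\<integral>x. iexp (t * x) * complex_of_real (q x) \<partial>lborel)
      = (\<integral>x. iexp (t * x) * complex_of_real (h x) \<partial>lborel)" for t
    using int_iexp[OF int_p, of t] int_iexp[OF int_q, of t]
    by (subst Bochner_Integration.integral_diff[symmetric]) (auto simp: h_eq algebra_simps)
  then have "AE x in lborel. p x = q x"
    using zero by (intro AE_eq_if_fourier_eq_nonneg int_p int_q) (auto simp: p_def q_def)
  then show ?thesis by eventually_elim (simp add: h_eq)
qed

lemma fourier_uniqueness:
  fixes g :: "real \<Rightarrow> complex"
  assumes int_g: "integrable lborel g"
    and zero: "\<And>t. (\<integral>x. iexp (t * x) * g x \<partial>lborel) = 0"
  shows "AE x in lborel. g x = 0"
proof -
  have int_cnj: "integrable lborel (\<lambda>x. cnj (g x))"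
    using int_g by (rule integrable_cnj)
  have zero_cnj: "(\<integral>x. iexp (t * x) * cnj (g x) \<partial>lborel) = 0" for t
  proof -
    have "(\<integral>x. iexp (t * x) * cnj (g x) \<partial>lborel) = (\<integral>x. cnj (iexp (- t * x) * g x) \<partial>lborel)"
      by (simp add: exp_cnj)
    also have "\<dots> = cnj (\<integral>x. iexp (- t * x) * g x \<partial>lborel)"
      by (rule Bochner_Integration.integral_cnj)
    finally show ?thesis using zero[of "- t"] by simp
  qed
  have int_sum: "integrable lborel (\<lambda>x. iexp (t * x) * g x)"
    "integrable lborel (\<lambda>x. iexp (t * x) * cnj (g x))" for t
    by (intro integrable_iexp_mult int_g int_cnj)+
  have Re_eq: "iexp (t * x) * complex_of_real (Re (g x))
      = (iexp (t * x) * g x + iexp (t * x) * cnj (g x)) / 2" for t x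
    by (simp add: distrib_left[symmetric] complex_add_cnj)
  have Im_eq: "iexp (t * x) * complex_of_real (Im (g x))
      = (iexp (t * x) * g x - iexp (t * x) * cnj (g x)) / (2 * \<i>)" for t x
  proof -
    have "complex_of_real (Im (g x)) = (g x - cnj (g x)) / (2 * \<i>)"
      by (simp add: complex_eq_iff)
    then show ?thesis by (simp only: right_diff_distrib times_divide_eq_right)
  qed
  have "AE x in lborel. Re (g x) = 0"
    using int_g int_sum zero zero_cnj
    by (intro fourier_uniqueness_real) (simp_all only: Re_eq integral_divide_zero integral_add, simp_all)
  moreover have "AE x in lborel. Im (g x) = 0"
    using int_g int_sum zero zero_cnj
    by (intro fourier_uniqueness_real) (simp_all only: Im_eq integral_divide_zero integral_diff, simp_all)
  ultimately show ?thesis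
    by eventually_elim (simp add: complex_eq_iff)
qed

section \<open>Holomorphic extension of the Fourier transform\<close>

definition fourier_integral :: "(real \<Rightarrow> complex) \<Rightarrow> complex \<Rightarrow> complex" where
  "fourier_integral g z = (\<integral>x. exp (- \<i> * complex_of_real x * z) * g x \<partial>lborel)"

lemma norm_exp_neg_i_mult_le: "norm (exp (- \<i> * complex_of_real x * z)) \<le> exp (\<bar>x\<bar> * \<bar>Im z\<bar>)"
  by (simp add: norm_exp_eq_Re abs_mult[symmetric])

lemma integrable_fourier_taylor_term:
  fixes g :: "real \<Rightarrow> complex"
  assumes [measurable]: "g \<in> borel_measurable borel"
    and decay: "\<And>x. norm (g x) \<le> C * exp (- a * \<bar>x\<bar>)"
    and z0: "\<bar>Im z0\<bar> < a"
  shows "integrable lborel (\<lambda>x. exp (- \<i> * complex_of_real x * z0) * g x * (- \<i> * complex_of_real x) ^ n / fact n)"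
proof -
  define \<rho> where "\<rho> = (a - \<bar>Im z0\<bar>) / 2"
  have \<rho>: "\<rho> > 0" using z0 by (simp add: \<rho>_def)
  have "0 \<le> C * exp (- a * \<bar>0\<bar>)"
    using decay[of 0] by (rule order_trans[OF norm_ge_zero])
  then have C: "C \<ge> 0" by simp
  have "integrable lborel (\<lambda>x. C * exp (- \<rho> * \<bar>x\<bar>) / \<rho> ^ n)"
    using integrable_exp_neg_abs[OF \<rho>] by simp
  then show ?thesis
  proof (rule Bochner_Integration.integrable_bound)
    show "AE x in lborel. norm (exp (- \<i> * complex_of_real x * z0) * g x * (- \<i> * complex_of_real x) ^ n / fact n)
        \<le> norm (C * exp (- \<rho> * \<bar>x\<bar>) / \<rho> ^ n)"
    proof (intro AE_I2)
      fix x :: real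
      have "norm (exp (- \<i> * complex_of_real x * z0) * g x * (- \<i> * complex_of_real x) ^ n / fact n)
          = norm (exp (- \<i> * complex_of_real x * z0)) * norm (g x) * (\<bar>x\<bar> ^ n / fact n)"
        by (simp add: norm_mult norm_divide norm_power)
      also have "\<dots> \<le> exp (\<bar>x\<bar> * \<bar>Im z0\<bar>) * (C * exp (- a * \<bar>x\<bar>)) * (\<bar>x\<bar> ^ n / fact n)"
        using norm_exp_neg_i_mult_le[of x z0] decay[of x]
        by (intro mult_right_mono mult_mono) auto
      also have "\<dots> = exp (\<bar>x\<bar> * \<bar>Im z0\<bar>) * (C * exp (- a * \<bar>x\<bar>)) * ((\<rho> * \<bar>x\<bar>) ^ n / fact n) / \<rho> ^ n"
        using \<rho> by (simp add: power_mult_distrib)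
      also have "\<dots> \<le> exp (\<bar>x\<bar> * \<bar>Im z0\<bar>) * (C * exp (- a * \<bar>x\<bar>)) * exp (\<rho> * \<bar>x\<bar>) / \<rho> ^ n"
        using \<rho> C power_div_fact_le_exp[of "\<rho> * \<bar>x\<bar>" n]
        by (intro divide_right_mono mult_left_mono) auto
      also have "\<dots> = C * exp (\<bar>x\<bar> * \<bar>Im z0\<bar> + - a * \<bar>x\<bar> + \<rho> * \<bar>x\<bar>) / \<rho> ^ n"
        by (simp only: exp_add mult_ac)
      also have "\<bar>x\<bar> * \<bar>Im z0\<bar> + - a * \<bar>x\<bar> + \<rho> * \<bar>x\<bar> = - \<rho> * \<bar>x\<bar>"
        by (simp add: \<rho>_def field_simps)
      finally show "norm (exp (- \<i> * complex_of_real x * z0) * g x * (- \<i> * complex_of_real x) ^ n / fact n)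
          \<le> norm (C * exp (- \<rho> * \<bar>x\<bar>) / \<rho> ^ n)"
        using \<rho> C by simp
    qed
  qed measurable
qed

lemma exp_neg_i_mult_taylor_sums:
  "(\<lambda>n. exp (- \<i> * complex_of_real x * z0) * c * (- \<i> * complex_of_real x) ^ n / fact n * h ^ n)
     sums (exp (- \<i> * complex_of_real x * (z0 + h)) * c)"
proof -
  have term_eq: "exp (- \<i> * complex_of_real x * z0) * c * ((- \<i> * complex_of_real x * h) ^ n /\<^sub>R fact n)
      = exp (- \<i> * complex_of_real x * z0) * c * (- \<i> * complex_of_real x) ^ n / fact n * h ^ n" for n
    unfolding power_mult_distrib[of "- \<i> * complex_of_real x" h]
    by (simp add: scaleR_conv_of_real divide_inverse mult_ac)
  have exp_eq: "exp (- \<i> * complex_of_real x * z0) * c * exp (- \<i> * complex_of_real x * h)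
      = exp (- \<i> * complex_of_real x * (z0 + h)) * c"
    by (simp add: exp_add[symmetric] algebra_simps)
  have "(\<lambda>n. exp (- \<i> * complex_of_real x * z0) * c * ((- \<i> * complex_of_real x * h) ^ n /\<^sub>R fact n))
      sums (exp (- \<i> * complex_of_real x * z0) * c * exp (- \<i> * complex_of_real x * h))"
    by (intro sums_mult exp_converges)
  then show ?thesis
    by (simp only: term_eq exp_eq)
qed

lemma norm_exp_neg_i_mult_taylor_sum_le:
  "norm (\<Sum>n<N. exp (- \<i> * complex_of_real x * z0) * c * (- \<i> * complex_of_real x) ^ n / fact n * h ^ n)
     \<le> norm c * exp (\<bar>x\<bar> * (\<bar>Im z0\<bar> + norm h))"
proof -
  have "norm (\<Sum>n<N. exp (- \<i> * complex_of_real x * z0) * c * (- \<i> * complex_of_real x) ^ n / fact n * h ^ n)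
      \<le> (\<Sum>n<N. norm (exp (- \<i> * complex_of_real x * z0)) * norm c * ((\<bar>x\<bar> * norm h) ^ n / fact n))"
    by (rule order_trans[OF norm_sum]) (simp add: norm_mult norm_divide norm_power power_mult_distrib mult_ac)
  also have "\<dots> = norm (exp (- \<i> * complex_of_real x * z0)) * norm c * (\<Sum>n<N. (\<bar>x\<bar> * norm h) ^ n / fact n)"
    by (simp add: sum_distrib_left)
  also have "\<dots> \<le> exp (\<bar>x\<bar> * \<bar>Im z0\<bar>) * norm c * exp (\<bar>x\<bar> * norm h)"
    using norm_exp_neg_i_mult_le[of x z0] sum_exp_series_le_exp[of "\<bar>x\<bar> * norm h" N]
    by (intro mult_mono) (auto intro!: sum_nonneg)
  also have "\<dots> = norm c * exp (\<bar>x\<bar> * (\<bar>Im z0\<bar> + norm h))"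
    by (simp add: exp_add[symmetric] algebra_simps)
  finally show ?thesis .
qed

lemma fourier_integral_sums:
  fixes g :: "real \<Rightarrow> complex"
  assumes [measurable]: "g \<in> borel_measurable borel"
    and decay: "\<And>x. norm (g x) \<le> C * exp (- a * \<bar>x\<bar>)"
    and z0: "\<bar>Im z0\<bar> < a" and h: "norm h < (a - \<bar>Im z0\<bar>) / 2"
  shows "(\<lambda>n. (\<integral>x. exp (- \<i> * complex_of_real x * z0) * g x * (- \<i> * complex_of_real x) ^ n / fact n \<partial>lborel) * h ^ n)
           sums fourier_integral g (z0 + h)"
proof -
  define \<rho> where "\<rho> = (a - \<bar>Im z0\<bar>) / 2"
  have \<rho>: "\<rho> > 0" using z0 by (simp add: \<rho>_def)
  define u where "u n x = exp (- \<i> * complex_of_real x * z0) * g x * (- \<i> * complex_of_real x) ^ n / fact n * h ^ n"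
    for n x
  have [measurable]: "(\<lambda>x. \<Sum>n<N. u n x) \<in> borel_measurable borel" for N
    unfolding u_def by measurable
  have C: "C \<ge> 0"
    using order_trans[OF norm_ge_zero decay[of 0]] by simp
  have bound: "norm (\<Sum>n<N. u n x) \<le> C * exp (- \<rho> * \<bar>x\<bar>)" for N x
  proof -
    have "\<bar>Im z0\<bar> + norm h \<le> a - \<rho>"
      using h by (simp add: \<rho>_def field_simps)
    then have "\<bar>x\<bar> * (\<bar>Im z0\<bar> + norm h) \<le> (a - \<rho>) * \<bar>x\<bar>"
      by (metis abs_ge_zero mult.commute mult_left_mono)
    then have "norm (g x) * exp (\<bar>x\<bar> * (\<bar>Im z0\<bar> + norm h)) \<le> C * exp (- a * \<bar>x\<bar>) * exp ((a - \<rho>) * \<bar>x\<bar>)"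
      using decay[of x] C by (intro mult_mono) auto
    also have "\<dots> = C * exp (- \<rho> * \<bar>x\<bar>)"
      by (simp add: exp_add[symmetric] algebra_simps)
    finally show ?thesis
      unfolding u_def by (rule order_trans[OF norm_exp_neg_i_mult_taylor_sum_le])
  qed
  have int_u: "integrable lborel (u n)" for n
    unfolding u_def by (intro integrable_mult_left integrable_fourier_taylor_term[OF assms(1) decay z0])
  have "(\<lambda>N. \<integral>x. (\<Sum>n<N. u n x) \<partial>lborel) \<longlonglongrightarrow> fourier_integral g (z0 + h)"
    unfolding fourier_integral_def
    by (rule integral_dominated_convergence[where w="\<lambda>x. C * exp (- \<rho> * \<bar>x\<bar>)"])
       (use bound integrable_exp_neg_abs[OF \<rho>] exp_neg_i_mult_taylor_sums in \<open>auto simp: u_def sums_def\<close>)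
  moreover have "(\<integral>x. (\<Sum>n<N. u n x) \<partial>lborel) = (\<Sum>n<N. integral\<^sup>L lborel (u n))" for N
    by (rule Bochner_Integration.integral_sum) (use int_u in auto)
  moreover have "integral\<^sup>L lborel (u n)
      = (\<integral>x. exp (- \<i> * complex_of_real x * z0) * g x * (- \<i> * complex_of_real x) ^ n / fact n \<partial>lborel) * h ^ n" for n
    unfolding u_def by (rule integral_mult_left_zero)
  ultimately show ?thesis
    unfolding sums_def by simp
qed

lemma Im_strip_eq: "{z::complex. \<bar>Im z\<bar> < a} = {z. Im z < a} \<inter> {z. Im z > - a}"
  by auto

lemma open_Im_strip: "open {z::complex. \<bar>Im z\<bar> < a}"
  unfolding Im_strip_eq by (intro open_Int open_halfspace_Im_lt open_halfspace_Im_gt)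

lemma connected_Im_strip: "connected {z::complex. \<bar>Im z\<bar> < a}"
  unfolding Im_strip_eq
  by (intro convex_connected convex_Int convex_halfspace_Im_lt convex_halfspace_Im_gt)

lemma fourier_integral_holomorphic:
  fixes g :: "real \<Rightarrow> complex"
  assumes "g \<in> borel_measurable borel"
    and decay: "\<And>x. norm (g x) \<le> C * exp (- a * \<bar>x\<bar>)"
  shows "fourier_integral g holomorphic_on {z. \<bar>Im z\<bar> < a}"
  unfolding holomorphic_on_def
proof
  fix z0 assume "z0 \<in> {z. \<bar>Im z\<bar> < a}"
  then have z0: "\<bar>Im z0\<bar> < a" by simp
  define \<rho> where "\<rho> = (a - \<bar>Im z0\<bar>) / 2"
  have "fourier_integral g holomorphic_on ball z0 \<rho>"
  proof (rule power_series_holomorphic)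
    fix z assume "z \<in> ball z0 \<rho>"
    then have "norm (z - z0) < \<rho>" by (simp add: dist_norm norm_minus_commute)
    then show "(\<lambda>n. (\<integral>x. exp (- \<i> * complex_of_real x * z0) * g x * (- \<i> * complex_of_real x) ^ n / fact n \<partial>lborel)
        * (z - z0) ^ n) sums fourier_integral g z"
      using fourier_integral_sums[OF assms z0, of "z - z0"] by (simp add: \<rho>_def)
  qed
  moreover have "\<rho> > 0" using z0 by (simp add: \<rho>_def)
  ultimately have "fourier_integral g field_differentiable (at z0)"
    by (intro holomorphic_on_imp_differentiable_at[of _ "ball z0 \<rho>"]) auto
  then show "fourier_integral g field_differentiable (at z0 within {z. \<bar>Im z\<bar> < a})"
    by (rule field_differentiable_at_within)
qed

text \<open>The midpoint of the interval is a limit point of the real zeros of \<open>f\<close>.\<close>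
lemma holomorphic_zero_if_AE_zero_on_interval:
  assumes hol: "f holomorphic_on S" and "open S" "connected S"
    and interval: "complex_of_real ` {a<..<b} \<subseteq> S" and "a < b"
    and ae: "AE t in lborel. a < t \<and> t < b \<longrightarrow> f (complex_of_real t) = 0"
    and "z \<in> S"
  shows "f z = 0"
proof -
  define U where "U = complex_of_real ` {t. a < t \<and> t < b \<and> f (complex_of_real t) = 0}"
  define m where "m = (a + b) / 2"
  have m: "a < m" "m < b" using \<open>a < b\<close> by (simp_all add: m_def)
  have limpt: "complex_of_real m islimpt U"
    unfolding islimpt_approachable
  proof (intro allI impI)
    fix e :: real assume "e > 0"
    then obtain t where t: "max a (m - e) < t" "t < m" "a < t \<and> t < b \<longrightarrow> f (complex_of_real t) = 0"
      using AE_lborel_ex_in_Ioo[OF ae, of "max a (m - e)" m] m by auto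
    then have "complex_of_real t \<in> U" using m by (auto simp: U_def)
    moreover have "dist (complex_of_real t) (complex_of_real m) < e"
      using t by (simp add: dist_real_def)
    ultimately show "\<exists>x'\<in>U. x' \<noteq> complex_of_real m \<and> dist x' (complex_of_real m) < e"
      using t by (intro bexI[of _ "complex_of_real t"]) auto
  qed
  have "U \<subseteq> S" "complex_of_real m \<in> S" using interval m by (auto simp: U_def)
  then show ?thesis
    by (rule analytic_continuation[OF hol \<open>open S\<close> \<open>connected S\<close> _ _ limpt _ \<open>z \<in> S\<close>])
       (auto simp: U_def)
qed

section \<open>The power-law kernel\<close>

lemma alpha_pl_measurable [measurable]: "alpha_pl \<alpha>0 \<omega>0 \<in> borel_measurable borel"
  unfolding alpha_pl_def[abs_def] by measurable

lemma Re_alpha_pl: "Re (alpha_pl \<alpha>0 \<omega>0 \<omega>) = \<alpha>0 * \<bar>\<omega>\<bar>"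
  by (simp add: alpha_pl_def)

lemma K_pl_eq_fourier_integral:
  "K_pl \<alpha>0 \<omega>0 x t = complex_of_real (1 / (2 * pi))
     * fourier_integral (\<lambda>\<omega>. exp (- alpha_pl \<alpha>0 \<omega>0 \<omega> * complex_of_real (norm x))) (complex_of_real t)"
proof -
  have "complex_of_real (1 / sqrt (2 * pi)) * complex_of_real (1 / sqrt (2 * pi)) = complex_of_real (1 / (2 * pi))"
    by (simp flip: of_real_mult)
  then show ?thesis
    unfolding K_pl_def inv_fourier_def fourier_integral_def mult.assoc[symmetric]
    by (simp add: mult_ac)
qed

theorem theorem4:
  fixes \<alpha>0 \<omega>0 :: real
  assumes "\<alpha>0 > 0" and "\<omega>0 \<noteq> 0"
  shows "\<not> causal (K_pl \<alpha>0 \<omega>0)"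
proof
  define G where "G \<omega> = exp (- alpha_pl \<alpha>0 \<omega>0 \<omega> * complex_of_real (norm (axis 1 1 :: real ^ 3)))" for \<omega>
  have [measurable]: "G \<in> borel_measurable borel"
    unfolding G_def[abs_def] by measurable
  have decay: "norm (G \<omega>) \<le> 1 * exp (- \<alpha>0 * \<bar>\<omega>\<bar>)" for \<omega>
    by (simp add: G_def norm_exp_eq_Re Re_alpha_pl)
  assume "causal (K_pl \<alpha>0 \<omega>0)"
  then have "AE t in lborel. -1 < t \<and> t < 0 \<longrightarrow> fourier_integral G (complex_of_real t) = 0"
    unfolding causal_def K_pl_eq_fourier_integral G_def
    by (auto elim!: allE[of _ "axis 1 1"] eventually_mono)
  then have "fourier_integral G z = 0" if "\<bar>Im z\<bar> < \<alpha>0" for z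
    using fourier_integral_holomorphic[OF _ decay] open_Im_strip connected_Im_strip \<open>\<alpha>0 > 0\<close> that
    by (intro holomorphic_zero_if_AE_zero_on_interval[where a="-1" and b=0]) auto
  moreover have "(\<integral>\<omega>. iexp (t * \<omega>) * G \<omega> \<partial>lborel) = fourier_integral G (complex_of_real (- t))" for t
    unfolding fourier_integral_def by (rule Bochner_Integration.integral_cong) (simp_all add: mult_ac)
  ultimately have "(\<integral>\<omega>. iexp (t * \<omega>) * G \<omega> \<partial>lborel) = 0" for t
    using \<open>\<alpha>0 > 0\<close> by simp
  moreover have "integrable lborel G"
    by (rule Bochner_Integration.integrable_bound[OF integrable_exp_neg_abs[OF \<open>\<alpha>0 > 0\<close>]])
       (use decay in auto)
  ultimately have "AE \<omega> in lborel. G \<omega> = 0"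
    by (intro fourier_uniqueness)
  then show False
    using AE_lborel_ex_in_Ioo[of "\<lambda>\<omega>. G \<omega> = 0" 0 1] by (simp add: G_def)
qed

end
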